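(* Let $M$ be a positive integer with $M\not\equiv0\bmod3$, $L$ a positive divisor of $M$ with $L^*>2$, and $\ell$ the number of prime factors of $L^*$. Then $J_0(L,M)=\frac16\Big(M\varphi(L^* )/L^*-\big(\tfrac{M}{3}\big)2^{\ell}\epsilon\Big)$, where $\big(\tfrac{M}{3}\big)$ is the Legendre symbol, and $\epsilon=1$ if $L^*$ has no prime factor congruent to $1\bmod3$, $\epsilon=0$ otherwise.
   Context: For a positive integer $n$, $n^*$ denotes the product of the distinct prime divisors of $n$, and $\varphi$ is Euler's totient function. For a positive integer $M$, a positive divisor $L$ of $M$ and an integer $k\ge0$, $J_k(L,M)=\sum_u u^k$, the sum over integers $u$ with $0<u<M/2$, $\gcd(u,L)=1$ and $u\equiv -M\bmod 3$. *)

theory Defs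
  imports "HOL-Number_Theory.Number_Theory"
begin

text \<open>n^*: the product of the distinct prime divisors of n (the radical).\<close>
definition rad :: "nat \<Rightarrow> nat" where
  "rad n = (\<Prod>p\<in>prime_factors n. p)"

definition J :: "nat \<Rightarrow> nat \<Rightarrow> nat \<Rightarrow> real" where
  "J k L M = (\<Sum>u\<in>{u::nat. 0 < u \<and> 2 * u < M \<and> coprime u L \<and> [int u = - int M] (mod 3)}.
       real u ^ k)"

end

theory Submission
  imports Defs
begin

text \<open>
  Write \<open>\<chi>\<close> for the nontrivial character modulo 3 and let \<open>P\<close> be the set of primes of \<open>L\<close>.
  Counting \<open>u < M/2\<close> with \<open>u \<equiv> -M (mod 3)\<close> and no prime factor in \<open>P\<close> is a sieve:
  removing the multiples of one more prime \<open>p \<mid> M\<close> subtracts the same count for \<open>M/p\<close>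
  (substitute \<open>u = p v\<close>; the congruence survives because \<open>p \<noteq> 3\<close>). The expression
  \<open>(M \<Prod>(1 - 1/p) - \<chi>(M) \<Prod>(1 - \<chi>(p)))/6\<close> obeys the same recursion, since \<open>\<chi>\<close> is
  multiplicative with \<open>\<chi>(p)\<^sup>2 = 1\<close>, and for \<open>P = {}\<close> it is the exact count up to a parity
  error of \<open>1/2\<close> for even \<open>M\<close>. Odd primes preserve the parity of \<open>M\<close>, so this error
  cancels as soon as one odd prime is sieved out, which \<open>L\<^sup>* > 2\<close> guarantees.
  Finally \<open>\<Prod>(1 - \<chi>(p))\<close> is \<open>2\<^sup>\<ell>\<close> or \<open>0\<close>, and \<open>\<chi>(M)\<close> is the Legendre symbol.
\<close>

definition chi3 :: "nat \<Rightarrow> int" where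
  "chi3 n = (if n mod 3 = 1 then 1 else if n mod 3 = 2 then -1 else 0)"

lemma chi3_mod_6: "chi3 (M mod 6) = chi3 M"
  by (simp add: chi3_def mod_mod_cancel)

lemma chi3_mult: "chi3 (a * b) = chi3 a * chi3 b"
proof -
  have "(a * b) mod 3 = ((a mod 3) * (b mod 3)) mod 3"
    by (simp add: mod_mult_eq)
  moreover have "a mod 3 \<in> {0, 1, 2}" "b mod 3 \<in> {0, 1, 2}"
    by auto
  ultimately show ?thesis
    unfolding chi3_def by auto
qed

lemma not_3_dvd_mod_3_cases: "\<not> 3 dvd (n::nat) \<Longrightarrow> n mod 3 = 1 \<or> n mod 3 = 2"
  by presburger

lemma chi3_square: "\<not> 3 dvd n \<Longrightarrow> chi3 n * chi3 n = 1"
  using not_3_dvd_mod_3_cases[of n] unfolding chi3_def by auto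

lemma Legendre_3_eq_chi3:
  assumes "\<not> 3 dvd M"
  shows "Legendre (int M) 3 = chi3 M"
proof -
  have not_cong_0: "\<not> [int M = 0] (mod 3)"
    using assms by (simp add: cong_0_iff) (metis int_dvd_int_iff of_nat_numeral)
  have square_mod_3: "y\<^sup>2 mod 3 \<in> {0, 1}" for y :: int
  proof -
    have "y\<^sup>2 mod 3 = (y mod 3)\<^sup>2 mod 3"
      by (metis power_mod)
    moreover have "y mod 3 \<in> {0, 1, 2}"
      by auto
    ultimately show ?thesis
      by auto
  qed
  have M_mod: "int M mod 3 = int (M mod 3)"
    using of_nat_mod[where 'a = int, of M 3] by simp
  consider "M mod 3 = 1" | "M mod 3 = 2"
    using not_3_dvd_mod_3_cases[OF assms] by blast
  then show ?thesis
  proof cases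
    case 1
    then have "[1\<^sup>2 = int M] (mod 3)"
      unfolding cong_def using M_mod by simp
    then have "QuadRes 3 (int M)"
      unfolding QuadRes_def by blast
    with 1 not_cong_0 show ?thesis
      by (simp add: Legendre_def chi3_def)
  next
    case 2
    have "\<not> QuadRes 3 (int M)"
    proof
      assume "QuadRes 3 (int M)"
      then obtain y where "[y\<^sup>2 = int M] (mod 3)"
        unfolding QuadRes_def by blast
      then have "y\<^sup>2 mod 3 = 2"
        using 2 M_mod unfolding cong_def by simp
      with square_mod_3[of y] show False
        by auto
    qed
    with 2 not_cong_0 show ?thesis
      by (simp add: Legendre_def chi3_def)
  qed
qed

lemma prod_one_minus_chi3:
  assumes "finite P" and "\<forall>p\<in>P. \<not> 3 dvd p"
  shows "(\<Prod>p\<in>P. 1 - real_of_int (chi3 p))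
           = 2 ^ card P * (if \<forall>p\<in>P. \<not> [p = 1] (mod 3) then 1 else 0)"
proof (cases "\<forall>p\<in>P. \<not> [p = 1] (mod 3)")
  case True
  then have "\<forall>p\<in>P. p mod 3 = 2"
    using assms(2) not_3_dvd_mod_3_cases by (auto simp: cong_def)
  then have "(\<Prod>p\<in>P. 1 - real_of_int (chi3 p)) = (\<Prod>p\<in>P. 2)"
    by (intro prod.cong) (auto simp: chi3_def)
  with True show ?thesis
    by simp
next
  case False
  then obtain p where "p \<in> P" "p mod 3 = 1"
    by (auto simp: cong_def)
  then have "(\<Prod>p\<in>P. 1 - real_of_int (chi3 p)) = 0"
    using assms(1) by (intro prod_zero bexI[of _ p]) (simp_all add: chi3_def)
  with False show ?thesis
    by simp
qed

definition sifted_count :: "nat set \<Rightarrow> nat \<Rightarrow> nat" where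
  "sifted_count P M = card {u. 0 < u \<and> 2 * u < M \<and> (\<forall>p\<in>P. \<not> p dvd u) \<and> 3 dvd (u + M)}"

definition sieve_estimate :: "nat set \<Rightarrow> nat \<Rightarrow> real" where
  "sieve_estimate P M = (real M * (\<Prod>p\<in>P. 1 - 1 / real p)
      - real_of_int (chi3 M) * (\<Prod>p\<in>P. 1 - real_of_int (chi3 p))) / 6"

lemma card_residue_class_below_half:
  assumes "c = 1 \<or> c = 2"
    and "\<And>u. 3 dvd (u + M) \<longleftrightarrow> u mod 3 = c"
    and "\<And>k. 2 * (3 * k + c) < M \<longleftrightarrow> k < n"
  shows "card {u. 0 < u \<and> 2 * u < M \<and> 3 dvd (u + M)} = n"
proof -
  have "{u. 0 < u \<and> 2 * u < M \<and> 3 dvd (u + M)} = (\<lambda>k. 3 * k + c) ` {..<n}"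
  proof (intro equalityI subsetI)
    fix u
    assume "u \<in> {u. 0 < u \<and> 2 * u < M \<and> 3 dvd (u + M)}"
    then have "u mod 3 = c" "2 * u < M"
      using assms(2) by auto
    then have "u = 3 * (u div 3) + c" "2 * u < M"
      using div_mult_mod_eq[of u 3] by simp_all
    with assms(3)[of "u div 3"] show "u \<in> (\<lambda>k. 3 * k + c) ` {..<n}"
      by (metis image_eqI lessThan_iff)
  next
    fix u
    assume "u \<in> (\<lambda>k. 3 * k + c) ` {..<n}"
    then obtain k where "k < n" "u = 3 * k + c"
      by auto
    with assms show "u \<in> {u. 0 < u \<and> 2 * u < M \<and> 3 dvd (u + M)}"
      by auto
  qed
  then show ?thesis
    by (simp add: card_image inj_on_def)
qed

lemma sifted_count_empty:
  assumes "\<not> 3 dvd M"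
  shows "real (sifted_count {} M) = sieve_estimate {} M - (if even M then 1/2 else 0)"
proof -
  let ?count = "card {u. 0 < u \<and> 2 * u < M \<and> 3 dvd (u + M)}"
  define q r where "q = M div 6" and "r = M mod 6"
  have M: "M = 6 * q + r"
    unfolding q_def r_def by simp
  have "r = 1 \<or> r = 2 \<or> r = 4 \<or> r = 5"
    using assms unfolding r_def by presburger
  then have "6 * real ?count = real M - real_of_int (chi3 r) - (if even r then 3 else 0)"
  proof (elim disjE)
    assume "r = 1"
    then have "?count = q"
      by (intro card_residue_class_below_half[of 2]) (simp_all add: M; presburger)+
    with \<open>r = 1\<close> M show ?thesis by (simp add: chi3_def)
  next
    assume "r = 2"
    then have "?count = q"
      by (intro card_residue_class_below_half[of 1]) (simp_all add: M; presburger)+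
    with \<open>r = 2\<close> M show ?thesis by (simp add: chi3_def)
  next
    assume "r = 4"
    then have "?count = q"
      by (intro card_residue_class_below_half[of 2]) (simp_all add: M; presburger)+
    with \<open>r = 4\<close> M show ?thesis by (simp add: chi3_def)
  next
    assume "r = 5"
    then have "?count = q + 1"
      by (intro card_residue_class_below_half[of 1]) (simp_all add: M; presburger)+
    with \<open>r = 5\<close> M show ?thesis by (simp add: chi3_def)
  qed
  moreover have "even r \<longleftrightarrow> even M"
    unfolding M by simp
  ultimately have "6 * real ?count = real M - real_of_int (chi3 M) - (if even M then 3 else 0)"
    unfolding r_def chi3_mod_6 by simp
  then show ?thesis
    unfolding sifted_count_def sieve_estimate_def by (cases "even M") (simp_all add: field_simps)
qed

lemma sifted_count_insert:
  assumes "prime p" "p \<noteq> 3" "p \<notin> P" "\<forall>q\<in>P. prime q" "p dvd M"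
  shows "sifted_count (insert p P) M + sifted_count P (M div p) = sifted_count P M"
proof -
  obtain K where M: "M = p * K"
    using assms(5) by blast
  have "p > 0" "\<not> 3 dvd p"
    using assms(1,2) prime_gt_0_nat primes_dvd_imp_eq[of 3 p] by auto
  define A where "A = {u. 0 < u \<and> 2 * u < M \<and> (\<forall>q\<in>P. \<not> q dvd u) \<and> 3 dvd (u + M)}"
  define B where "B = {v. 0 < v \<and> 2 * v < K \<and> (\<forall>q\<in>P. \<not> q dvd v) \<and> 3 dvd (v + K)}"
  have "finite A"
    unfolding A_def by (rule finite_subset[of _ "{..<M}"]) auto
  have "{u \<in> A. p dvd u} = (\<lambda>v. p * v) ` B"
  proof (intro equalityI subsetI)
    fix u
    assume "u \<in> {u \<in> A. p dvd u}"
    then obtain v where v: "u = p * v" "0 < u" "2 * u < M" "\<forall>q\<in>P. \<not> q dvd u" "3 dvd p * (v + K)"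
      unfolding A_def M by (auto simp: distrib_left)
    have "3 dvd v + K"
      using v(5) \<open>\<not> 3 dvd p\<close> prime_dvd_mult_iff[of "3::nat" p "v + K"] by simp
    with v \<open>p > 0\<close> have "v \<in> B"
      unfolding B_def M by auto
    with v(1) show "u \<in> (\<lambda>v. p * v) ` B"
      by blast
  next
    fix u
    assume "u \<in> (\<lambda>v. p * v) ` B"
    then obtain v where v: "u = p * v" "v \<in> B"
      by blast
    have "\<not> q dvd u" if "q \<in> P" for q
    proof -
      have "\<not> q dvd p"
        using that assms(1,3,4) primes_dvd_imp_eq by blast
      with that v assms(4) show ?thesis
        unfolding B_def by (auto simp: prime_dvd_mult_iff)
    qed
    with v \<open>p > 0\<close> show "u \<in> {u \<in> A. p dvd u}"
      unfolding A_def B_def M by (auto simp: distrib_left[symmetric])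
  qed
  then have "card {u \<in> A. p dvd u} = card B"
    using \<open>p > 0\<close> by (simp add: card_image inj_on_def)
  moreover have "card A = card {u \<in> A. \<not> p dvd u} + card {u \<in> A. p dvd u}"
    using \<open>finite A\<close> by (subst card_Un_disjoint[symmetric]) (auto intro: arg_cong[where f = card])
  moreover have "{u \<in> A. \<not> p dvd u}
      = {u. 0 < u \<and> 2 * u < M \<and> (\<forall>q\<in>insert p P. \<not> q dvd u) \<and> 3 dvd (u + M)}"
    unfolding A_def by auto
  ultimately show ?thesis
    unfolding sifted_count_def A_def B_def using M \<open>p > 0\<close> by simp
qed

lemma sieve_estimate_insert:
  assumes "finite P" "p \<notin> P" "prime p" "p \<noteq> 3" "p dvd M"
  shows "sieve_estimate (insert p P) M = sieve_estimate P M - sieve_estimate P (M div p)"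
proof -
  obtain K where M: "M = p * K"
    using assms(5) by blast
  have "p > 0" "\<not> 3 dvd p"
    using assms(3,4) prime_gt_0_nat primes_dvd_imp_eq[of 3 p] by auto
  have "M div p = K" "real K = real M / real p"
    using \<open>p > 0\<close> M by simp_all
  moreover have "real_of_int (chi3 K) = real_of_int (chi3 M) * real_of_int (chi3 p)"
    using chi3_square[OF \<open>\<not> 3 dvd p\<close>] unfolding M chi3_mult
    by (metis mult.assoc mult.commute mult.right_neutral of_int_mult)
  ultimately show ?thesis
    using assms(1,2) \<open>p > 0\<close> unfolding sieve_estimate_def
    by (simp add: field_simps)
qed

lemma sifted_count_odd_primes:
  assumes "finite P" "\<forall>p\<in>P. prime p \<and> p \<noteq> 2 \<and> p \<noteq> 3" "\<Prod>P dvd M" "\<not> 3 dvd M"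
  shows "real (sifted_count P M) = sieve_estimate P M - (if P = {} \<and> even M then 1/2 else 0)"
  using assms
proof (induction P arbitrary: M rule: finite_induct)
  case empty
  then show ?case
    using sifted_count_empty by simp
next
  case (insert p F)
  have p: "prime p" "p \<noteq> 2" "p \<noteq> 3" and odd_primes: "\<forall>q\<in>F. prime q \<and> q \<noteq> 2 \<and> q \<noteq> 3"
    using insert.prems(1) by auto
  define K where "K = M div p"
  have "\<Prod>F * p dvd M"
    using insert.prems(2) insert.hyps(1,2) by (simp add: mult.commute)
  then have M: "M = p * K" and "\<Prod>F dvd K"
    unfolding K_def by (auto dest: dvd_mult_imp_div dvd_mult_right)
  have "odd p"
    using prime_odd_nat[OF p(1)] prime_ge_2_nat[OF p(1)] p(2) by simp
  then have same_parity: "even K \<longleftrightarrow> even M"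
    unfolding M by simp
  have "\<Prod>F dvd M" "\<not> 3 dvd K"
    using \<open>\<Prod>F dvd K\<close> insert.prems(3) unfolding M by auto
  then have "real (sifted_count F M) - real (sifted_count F K) = sieve_estimate F M - sieve_estimate F K"
    using insert.IH[OF odd_primes \<open>\<Prod>F dvd M\<close> insert.prems(3)]
      insert.IH[OF odd_primes \<open>\<Prod>F dvd K\<close> \<open>\<not> 3 dvd K\<close>] same_parity
    by simp
  moreover have "sifted_count (insert p F) M + sifted_count F K = sifted_count F M"
    using sifted_count_insert[of p F M] insert.hyps(2) odd_primes p M by simp
  moreover have "sieve_estimate (insert p F) M = sieve_estimate F M - sieve_estimate F K"
    using sieve_estimate_insert[of F p M] insert.hyps p M prime_gt_0_nat by simp
  ultimately show ?case
    by simp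
qed

lemma sifted_count_eq_sieve_estimate:
  assumes "finite P" "\<forall>p\<in>P. prime p \<and> p \<noteq> 3" "\<Prod>P dvd M" "\<not> 3 dvd M" "\<Prod>P > 2"
  shows "real (sifted_count P M) = sieve_estimate P M"
proof (cases "2 \<in> P")
  case False
  then have "\<forall>p\<in>P. prime p \<and> p \<noteq> 2 \<and> p \<noteq> 3"
    using assms(2) by auto
  moreover have "P \<noteq> {}"
    using assms(5) by auto
  ultimately show ?thesis
    using sifted_count_odd_primes[OF assms(1) _ assms(3,4)] by simp
next
  case True
  define F where "F = P - {2}"
  have P: "P = insert 2 F" "2 \<notin> F" "finite F"
    using True assms(1) unfolding F_def by auto
  then have "\<Prod>P = 2 * \<Prod>F"
    by simp
  have "F \<noteq> {}"
    using assms(5) \<open>\<Prod>P = 2 * \<Prod>F\<close> by auto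
  define K where "K = M div 2"
  have "\<Prod>F * 2 dvd M"
    using assms(3) \<open>\<Prod>P = 2 * \<Prod>F\<close> by (simp add: mult.commute)
  then have M: "M = 2 * K" and "\<Prod>F dvd K"
    unfolding K_def by (auto dest: dvd_mult_imp_div dvd_mult_right)
  have odd_primes: "\<forall>p\<in>F. prime p \<and> p \<noteq> 2 \<and> p \<noteq> 3"
    using assms(2) P by auto
  have "\<Prod>F dvd M" "\<not> 3 dvd K"
    using \<open>\<Prod>F dvd K\<close> assms(4) unfolding M by auto
  then have "real (sifted_count F M) - real (sifted_count F K) = sieve_estimate F M - sieve_estimate F K"
    using sifted_count_odd_primes[OF P(3) odd_primes] \<open>F \<noteq> {}\<close> \<open>\<Prod>F dvd K\<close> assms(4)
    by simp
  moreover have "sifted_count P M + sifted_count F K = sifted_count F M"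
    using sifted_count_insert[of 2 F M] P odd_primes M by simp
  moreover have "sieve_estimate P M = sieve_estimate F M - sieve_estimate F K"
    using sieve_estimate_insert[of F 2 M] P M by simp
  ultimately show ?thesis
    by simp
qed

lemma prime_factors_rad: "prime_factors (rad n) = prime_factors n"
proof -
  have "prime_factors (rad n) = (\<Union>p\<in>prime_factors n. prime_factors p)"
    unfolding rad_def by (subst prime_factors_prod) auto
  also have "\<dots> = (\<Union>p\<in>prime_factors n. {p})"
    by (intro SUP_cong refl) (simp add: prime_prime_factors in_prime_factors_imp_prime)
  finally show ?thesis
    by simp
qed

lemma rad_pos: "rad n > 0"
  unfolding rad_def by (intro prod_pos) (simp add: in_prime_factors_imp_prime prime_gt_0_nat)

lemma rad_dvd: "rad n dvd n"
proof (cases "n = 0")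
  case False
  have "(\<Prod>p\<in>prime_factors n. p) dvd (\<Prod>p\<in>prime_factors n. p ^ multiplicity p n)"
    by (intro prod_dvd_prod) (simp add: prime_factors_multiplicity)
  with False show ?thesis
    unfolding rad_def by (simp add: prime_factorization_nat[symmetric])
qed simp

lemma totient_rad_div_rad: "real (totient (rad n)) / real (rad n) = (\<Prod>p\<in>prime_factors n. 1 - 1 / real p)"
  using totient_formula2[of "rad n"] rad_pos[of n] by (simp add: prime_factors_rad)

lemma coprime_iff_no_prime_factor_dvd:
  fixes m n :: nat
  assumes "n \<noteq> 0"
  shows "coprime m n \<longleftrightarrow> (\<forall>p\<in>prime_factors n. \<not> p dvd m)"
proof
  assume "coprime m n"
  then show "\<forall>p\<in>prime_factors n. \<not> p dvd m"
    by (auto simp: in_prime_factors_iff dest: coprime_common_divisor_nat)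
next
  assume no_dvd: "\<forall>p\<in>prime_factors n. \<not> p dvd m"
  show "coprime m n"
  proof (rule ccontr)
    assume "\<not> coprime m n"
    then obtain p where "prime p" "p dvd m" "p dvd n"
      by (metis coprime_iff_gcd_eq_1 prime_factor_nat gcd_dvd1 gcd_dvd2 dvd_trans)
    with assms no_dvd show False
      by (auto simp: in_prime_factors_iff)
  qed
qed

lemma J_0_eq_sifted_count:
  assumes "L \<noteq> 0"
  shows "J 0 L M = real (sifted_count (prime_factors L) M)"
proof -
  have "[int u = - int M] (mod 3) \<longleftrightarrow> 3 dvd (u + M)" for u
  proof -
    have "[int u = - int M] (mod 3) \<longleftrightarrow> int 3 dvd int (u + M)"
      by (simp add: cong_iff_dvd_diff)
    then show ?thesis
      by (simp only: int_dvd_int_iff)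
  qed
  then have "{u. 0 < u \<and> 2 * u < M \<and> coprime u L \<and> [int u = - int M] (mod 3)}
      = {u. 0 < u \<and> 2 * u < M \<and> (\<forall>p\<in>prime_factors L. \<not> p dvd u) \<and> 3 dvd (u + M)}"
    using coprime_iff_no_prime_factor_dvd[OF assms] by blast
  then show ?thesis
    unfolding J_def sifted_count_def by simp
qed

theorem propositionA4:
  fixes M L :: nat
  assumes "M > 0" and "\<not> 3 dvd M" and "L > 0" and "L dvd M" and "rad L > 2"
  shows "J 0 L M =
    (1/6) * (real M * real (totient (rad L)) / real (rad L)
      - real_of_int (Legendre (int M) 3) * 2 ^ card (prime_factors (rad L))
        * (if \<forall>p\<in>prime_factors (rad L). \<not> [p = 1] (mod 3) then 1 else 0))"
proof -
  let ?P = "prime_factors L"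
  have primes: "\<forall>p\<in>?P. prime p \<and> p \<noteq> 3"
  proof
    fix p
    assume "p \<in> ?P"
    then have "prime p" "p dvd M"
      using assms(4) by (auto simp: in_prime_factors_iff intro: dvd_trans)
    with assms(2) show "prime p \<and> p \<noteq> 3"
      by auto
  qed
  then have not_3_dvd: "\<forall>p\<in>?P. \<not> 3 dvd p"
    using primes_dvd_imp_eq[of "3::nat"] by auto
  have "\<Prod>?P dvd M" "\<Prod>?P > 2"
    using dvd_trans[OF rad_dvd[of L] assms(4)] assms(5) by (simp_all add: rad_def)
  then have "J 0 L M = sieve_estimate ?P M"
    using J_0_eq_sifted_count[of L M] sifted_count_eq_sieve_estimate[OF _ primes _ assms(2)] assms(3)
    by simp
  moreover have "real M * real (totient (rad L)) / real (rad L) = real M * (\<Prod>p\<in>?P. 1 - 1 / real p)"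
    by (metis times_divide_eq_right totient_rad_div_rad)
  ultimately show ?thesis
    using prod_one_minus_chi3[OF finite_set_mset not_3_dvd]
    unfolding sieve_estimate_def prime_factors_rad Legendre_3_eq_chi3[OF assms(2)]
    by (simp add: mult.assoc)
qed

end
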